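(* Let $k\ge2$ and $n\ge k$. In the simultaneous sealed-bid auction of $n$ objects among an adversary ${\mathcal A}$ and $k-1$ disadvantaged bidders described in the context, suppose each disadvantaged bidder independently draws his bid vector $(b_1,\dots,b_n)$ from an $n$-dimensional probability distribution with $\sum_i b_i=1$ such that each $b_i$ has cumulative distribution function $F_k$, where $F_k(x)=\left(\frac nk x\right)^{\frac1{k-1}}$ for $x\in[0,\frac kn]$ and $F_k(x)=1$ for $x\in(\frac kn,1]$. Then for every (possibly randomized, independent of the disadvantaged bidders' bids) bid vector of ${\mathcal A}$, the expected number of objects won by ${\mathcal A}$ is at most $n/k$.
   Context: Auction model: $n$ objects are auctioned simultaneously to $k$ bidders; each bidder has budget $1$ and submits a vector of bids (one per object, positive reals) with sum at most $1$. Each object is won by the highest bidder on it; if $m$ bidders tie for the highest bid, each wins with probability $1/m$. The adversary ${\mathcal A}$ knows the bidding algorithms (bid distributions) of the other $k-1$ bidders but not their realized bids. *)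

theory Defs
  imports "HOL-Probability.Probability"
begin

definition bid_space :: "nat \<Rightarrow> (nat \<Rightarrow> real) measure" where
  "bid_space n = PiM {..<n} (\<lambda>_. borel)"

definition Fk :: "nat \<Rightarrow> nat \<Rightarrow> real \<Rightarrow> real" where
  "Fk n k x = (if x \<le> real k / real n
               then (real n / real k * x) powr (1 / (real k - 1)) else 1)"

text \<open>Probability that the adversary (bid vector a) wins object i against m opponents
  with realized bid vectors b 0, ..., b (m-1): ties among the highest bidders are
  broken uniformly at random.\<close>
definition win_share :: "nat \<Rightarrow> (nat \<Rightarrow> real) \<Rightarrow> (nat \<Rightarrow> nat \<Rightarrow> real) \<Rightarrow> nat \<Rightarrow> real" where
  "win_share m a b i =
     (if (\<forall>j<m. b j i \<le> a i)
      then 1 / (1 + real (card {j. j < m \<and> b j i = a i})) else 0)"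

definition adv_wins :: "nat \<Rightarrow> nat \<Rightarrow> (nat \<Rightarrow> real) \<Rightarrow> (nat \<Rightarrow> nat \<Rightarrow> real) \<Rightarrow> real" where
  "adv_wins n m a b = (\<Sum>i<n. win_share m a b i)"

end

theory Submission
  imports Defs
begin

text \<open>The adversary can win object i only if each of the k - 1 opponents bids at most
  a i on it. The opponents bid independently, so this happens with probability
  F_k(a i)^(k-1) \<le> (n/k) a i, and summing over the objects bounds the expected number of
  wins by (n/k) \<Sum>i a i \<le> n/k.\<close>

lemma measure_PiM_PiE:
  assumes "finite I" and "\<And>i. i \<in> I \<Longrightarrow> prob_space (M i)"
    and "\<And>i. i \<in> I \<Longrightarrow> X i \<in> sets (M i)"
  shows "measure (PiM I M) (Pi\<^sub>E I X) = (\<Prod>i\<in>I. measure (M i) (X i))"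
proof -
  interpret P: prob_space "PiM I M" by (rule prob_space_PiM) fact
  have "emeasure (PiM I M) (Pi\<^sub>E I X) = (\<Prod>i\<in>I. emeasure (M i) (X i))"
    using emeasure_PiM_emb[of I M I X] assms
    by (simp add: prod_emb_PiE_same_index sets.sets_into_space)
  also have "\<dots> = ennreal (\<Prod>i\<in>I. measure (M i) (X i))"
    using assms
    by (simp add: prob_space_def finite_measure.emeasure_eq_measure prod_ennreal)
  finally show ?thesis
    by (simp add: P.emeasure_eq_measure prod_nonneg)
qed

lemma sets_bid_le:
  assumes "sets M = sets (bid_space n)" and "i < n"
  shows "{x \<in> space M. x i \<le> c} \<in> sets M"
proof -
  have "(\<lambda>x. x i) \<in> borel_measurable M"
    using assms measurable_cong_sets[of M "bid_space n" borel borel]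
    by (simp add: bid_space_def)
  then show ?thesis by measurable
qed

lemma win_share_le_indicator:
  "win_share m a b i \<le> indicator {b. \<forall>j<m. b j i \<le> a i} b"
  by (simp add: win_share_def)

lemma adv_wins_le_sum_indicator:
  "adv_wins n m a b \<le> (\<Sum>i<n. indicator {b. \<forall>j<m. b j i \<le> a i} b)"
  unfolding adv_wins_def by (intro sum_mono win_share_le_indicator)

lemma expected_adv_wins_le:
  assumes "\<forall>j<m. prob_space (D j) \<and> sets (D j) = sets (bid_space n)"
  shows "(\<integral>b. adv_wins n m a b \<partial>PiM {..<m} D)
           \<le> (\<Sum>i<n. \<Prod>j<m. measure (D j) {x \<in> space (D j). x i \<le> a i})"
proof -
  let ?P = "PiM {..<m} D"
  define S where "S i = (\<Pi>\<^sub>E j\<in>{..<m}. {x \<in> space (D j). x i \<le> a i})" for i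
  interpret P: prob_space ?P using assms by (intro prob_space_PiM) auto
  have S_sets: "S i \<in> sets ?P" if "i < n" for i
    unfolding S_def using assms that sets_bid_le by (intro sets_PiM_I_finite) auto
  have S_indicator: "indicator (S i) b = indicator {b. \<forall>j<m. b j i \<le> a i} b"
    if "b \<in> space ?P" for b i
    using that by (auto simp: S_def space_PiM indicator_def)
  have "(\<integral>b. adv_wins n m a b \<partial>?P) \<le> (\<integral>b. (\<Sum>i<n. indicator (S i) b) \<partial>?P)"
    using S_sets adv_wins_le_sum_indicator
    by (intro integral_mono')
      (auto simp: S_indicator P.emeasure_finite less_top[symmetric]
        intro!: sum_nonneg integrable_sum integrable_real_indicator)
  also have "\<dots> = (\<Sum>i<n. measure ?P (S i))"
    using S_sets by (simp add: P.emeasure_eq_measure)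
  also have "\<dots> = (\<Sum>i<n. \<Prod>j<m. measure (D j) {x \<in> space (D j). x i \<le> a i})"
    unfolding S_def using assms sets_bid_le
    by (intro sum.cong refl measure_PiM_PiE) auto
  finally show ?thesis .
qed

lemma Fk_power_le:
  assumes "k \<ge> 2" and "n \<ge> k" and "0 < x"
  shows "Fk n k x ^ (k - 1) \<le> real n / real k * x"
proof (cases "x \<le> real k / real n")
  case True
  have pos: "real n / real k * x > 0" using assms by auto
  have "Fk n k x ^ (k - 1) = ((real n / real k * x) powr (1 / (real k - 1))) ^ (k - 1)"
    using True by (simp add: Fk_def)
  also have "\<dots> = (real n / real k * x) powr (real (k - 1) * (1 / (real k - 1)))"
    using pos assms by (subst powr_power) auto
  also have "real (k - 1) * (1 / (real k - 1)) = 1" using assms by (simp add: of_nat_diff)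
  finally show ?thesis using pos assms by simp
next
  case False
  then have "1 \<le> real n / real k * x" using assms by (simp add: field_simps)
  then show ?thesis using False by (simp add: Fk_def)
qed

theorem lemma3p1:
  fixes n k :: nat
    and D :: "nat \<Rightarrow> (nat \<Rightarrow> real) measure"
    and A :: "(nat \<Rightarrow> real) measure"
  assumes "k \<ge> 2" and "n \<ge> k"
    and "\<forall>j<k-1. prob_space (D j) \<and> sets (D j) = sets (bid_space n)"
    and "\<forall>j<k-1. AE b in D j. (\<forall>i<n. b i > 0) \<and> (\<Sum>i<n. b i) = 1"
    and "\<forall>j<k-1. \<forall>i<n. \<forall>x\<in>{0..1}.
           measure (D j) {b \<in> space (D j). b i \<le> x} = Fk n k x"
    and "prob_space A" and "sets A = sets (bid_space n)"
    and "AE a in A. (\<forall>i<n. a i > 0) \<and> (\<Sum>i<n. a i) \<le> 1"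
  shows "(\<integral>a. (\<integral>b. adv_wins n (k-1) a b \<partial>(PiM {..<k-1} D)) \<partial>A) \<le> real n / real k"
proof -
  interpret A: prob_space A by fact
  have "(\<integral>b. adv_wins n (k-1) a b \<partial>PiM {..<k-1} D) \<le> real n / real k"
    if pos: "\<forall>i<n. a i > 0" and budget: "(\<Sum>i<n. a i) \<le> 1" for a
  proof -
    have le_1: "a i \<le> 1" if "i < n" for i
      using pos that budget member_le_sum[of i "{..<n}" a] by fastforce
    have "(\<integral>b. adv_wins n (k-1) a b \<partial>PiM {..<k-1} D)
            \<le> (\<Sum>i<n. \<Prod>j<k-1. measure (D j) {x \<in> space (D j). x i \<le> a i})"
      by (rule expected_adv_wins_le[OF assms(3)])
    also have "\<dots> = (\<Sum>i<n. Fk n k (a i) ^ (k-1))"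
      using assms(5) pos le_1 by (intro sum.cong) (auto simp: less_imp_le)
    also have "\<dots> \<le> (\<Sum>i<n. real n / real k * a i)"
      using Fk_power_le[OF assms(1,2)] pos by (intro sum_mono) auto
    also have "\<dots> \<le> real n / real k"
      unfolding sum_distrib_left[symmetric] using budget assms by (intro mult_left_le) auto
    finally show ?thesis .
  qed
  then have "(\<integral>a. (\<integral>b. adv_wins n (k-1) a b \<partial>PiM {..<k-1} D) \<partial>A) \<le> (\<integral>a. real n / real k \<partial>A)"
    using assms(8) by (intro integral_mono_AE') auto
  then show ?thesis by (simp add: A.prob_space)
qed

end
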